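(* Let $n$ be a positive integer and $H=([n],E)$ an $r$-uniform hypergraph with $r\ge2$. Then for all $0\le i\le n$, \[\sum_{c=0}^i(-1)^c\binom{i}{c}\Big((i-c+2)^n-\#E\cdot(i-c+2)^{n-r+1}\Big)\le f_i(\chi_H(k+1))\le\sum_{c=0}^i(-1)^c\binom{i}{c}(i-c+2)^n.\] (The upper bound holds for arbitrary hypergraphs without loops on $[n]$.)
   Context: A hypergraph $H=([n],E)$ has edges that are nonempty subsets of $[n]$, no edge of size 1, no edge properly contained in another; $r$-uniform means all edges have cardinality $r$. A proper $k$-coloring is a map $[n]\to[k]$ with no monochromatic edge; $\chi_H(k)$ is the number of proper $k$-colorings. For a polynomial $p(k)$ of degree at most $n$, its $f$-vector is defined by $p(k)=\sum_{i=0}^n f_i(p)\binom{k-1}{i}$, $f_{-1}=1$; $f_i(\chi_H(k+1))$ refers to the polynomial $k\mapsto\chi_H(k+1)$. *)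

theory Defs
  imports "HOL-Library.FuncSet" "HOL-Computational_Algebra.Polynomial"
begin

definition hypergraph :: "nat \<Rightarrow> nat set set \<Rightarrow> bool" where
  "hypergraph n E \<longleftrightarrow>
     (\<forall>e\<in>E. e \<subseteq> {1..n} \<and> e \<noteq> {} \<and> card e \<noteq> 1) \<and>
     (\<forall>e\<in>E. \<forall>e'\<in>E. e \<subseteq> e' \<longrightarrow> e = e')"

definition uniform :: "nat \<Rightarrow> nat set set \<Rightarrow> bool" where
  "uniform r E \<longleftrightarrow> (\<forall>e\<in>E. card e = r)"

definition chi :: "nat \<Rightarrow> nat set set \<Rightarrow> nat \<Rightarrow> nat" where
  "chi n E k = card {c \<in> {1..n} \<rightarrow>\<^sub>E {1..k}.
                       \<forall>e\<in>E. \<not> (\<exists>a. \<forall>v\<in>e. c v = a)}"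

definition chrom_poly :: "nat \<Rightarrow> nat set set \<Rightarrow> real poly" where
  "chrom_poly n E = (THE p. degree p \<le> n \<and> (\<forall>k::nat. poly p (real k) = real (chi n E k)))"

definition fvec :: "nat \<Rightarrow> real poly \<Rightarrow> nat \<Rightarrow> real" where
  "fvec n p = (THE f. (\<forall>i>n. f i = 0) \<and>
                      (\<forall>x. poly p x = (\<Sum>i\<le>n. f i * ((x - 1) gchoose i))))"

end

theory Submission
  imports Defs
begin

(* The central quantity is the number of colourings of [n] with colours {1..d+i} that use every
   one of the colours d+1, ..., d+i.  Classifying colourings by the set of used colours gives,
   for any property Q invariant under renaming colours, the binomial expansion
     #(Q-colourings with d + m colours) = \<Sum>k\<le>m. (m choose k) * #(covering Q-colourings).
   With d = 2 and Q = properness this identifies f_i(\<chi>_H(k+1)) with the number of proper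
   colourings with colours {1..i+2} using all of 3, ..., i+2 (fvec_shifted_chrom_poly).
   For Q = True, resp. Q = "edge e is monochromatic", the left side is k^n, resp. k^(n-r+1),
   so binomial inversion gives the alternating sums of the theorem.  The upper bound then
   follows by dropping properness, the lower bound by a union bound over the edges. *)

(* For Q = proper colourings these are the coefficients of the chromatic polynomial in the
   binomial basis. *)
definition covering_count ::
    "((nat \<Rightarrow> nat) \<Rightarrow> bool) \<Rightarrow> nat set \<Rightarrow> nat set \<Rightarrow> nat set \<Rightarrow> nat" where
  "covering_count Q S Y Z = card {c \<in> S \<rightarrow>\<^sub>E Y. Q c \<and> Z \<subseteq> c ` S}"

definition colour_invariant :: "((nat \<Rightarrow> nat) \<Rightarrow> bool) \<Rightarrow> nat set \<Rightarrow> bool" where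
  "colour_invariant Q S \<longleftrightarrow> (\<forall>c f. inj_on f (c ` S) \<longrightarrow> Q (restrict (f \<circ> c) S) = Q c)"

lemma relabel_covering_colouring:
  assumes Q: "colour_invariant Q S" and \<sigma>: "bij_betw \<sigma> Y Y'"
    and c: "c \<in> S \<rightarrow>\<^sub>E Y" "Q c" "Z \<subseteq> c ` S"
  shows "restrict (\<sigma> \<circ> c) S \<in> {c \<in> S \<rightarrow>\<^sub>E Y'. Q c \<and> \<sigma> ` Z \<subseteq> c ` S}"
proof -
  have "c ` S \<subseteq> Y" using c(1) by auto
  then have "inj_on \<sigma> (c ` S)" using \<sigma> by (meson bij_betw_def inj_on_subset)
  then have "Q (restrict (\<sigma> \<circ> c) S)" using Q c(2) unfolding colour_invariant_def by blast
  moreover have "restrict (\<sigma> \<circ> c) S \<in> S \<rightarrow>\<^sub>E Y'"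
    using c(1) \<sigma> by (auto simp: bij_betw_def PiE_iff)
  moreover have "\<sigma> ` Z \<subseteq> restrict (\<sigma> \<circ> c) S ` S" using c(3) by force
  ultimately show ?thesis by blast
qed

lemma covering_count_bij_betw:
  assumes Q: "colour_invariant Q S" and \<sigma>: "bij_betw \<sigma> Y Y'" and ZY: "Z \<subseteq> Y"
  shows "covering_count Q S Y Z = covering_count Q S Y' (\<sigma> ` Z)"
proof -
  define \<tau> where "\<tau> = inv_into Y \<sigma>"
  have \<tau>: "bij_betw \<tau> Y' Y" unfolding \<tau>_def using \<sigma> by (rule bij_betw_inv_into)
  have \<tau>\<sigma>: "\<And>y. y \<in> Y \<Longrightarrow> \<tau> (\<sigma> y) = y" and \<sigma>\<tau>: "\<And>y. y \<in> Y' \<Longrightarrow> \<sigma> (\<tau> y) = y"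
    unfolding \<tau>_def using \<sigma> by (auto simp: bij_betw_def f_inv_into_f)
  let ?A = "{c \<in> S \<rightarrow>\<^sub>E Y. Q c \<and> Z \<subseteq> c ` S}"
  let ?B = "{c \<in> S \<rightarrow>\<^sub>E Y'. Q c \<and> \<sigma> ` Z \<subseteq> c ` S}"
  have \<tau>\<sigma>Z: "\<tau> ` \<sigma> ` Z = Z" using \<tau>\<sigma> ZY by force
  have "bij_betw (\<lambda>c. restrict (\<sigma> \<circ> c) S) ?A ?B"
  proof (intro bij_betw_byWitness[where f'="\<lambda>c. restrict (\<tau> \<circ> c) S"])
    show "\<forall>c\<in>?A. restrict (\<tau> \<circ> restrict (\<sigma> \<circ> c) S) S = c"
      using \<tau>\<sigma> by (auto simp: fun_eq_iff PiE_iff extensional_def)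
    show "\<forall>c\<in>?B. restrict (\<sigma> \<circ> restrict (\<tau> \<circ> c) S) S = c"
      using \<sigma>\<tau> by (auto simp: fun_eq_iff PiE_iff extensional_def)
    show "(\<lambda>c. restrict (\<sigma> \<circ> c) S) ` ?A \<subseteq> ?B"
      using relabel_covering_colouring[OF Q \<sigma>] by blast
    show "(\<lambda>c. restrict (\<tau> \<circ> c) S) ` ?B \<subseteq> ?A"
      using relabel_covering_colouring[OF Q \<tau>, of _ "\<sigma> ` Z"] unfolding \<tau>\<sigma>Z by blast
  qed
  then show ?thesis unfolding covering_count_def by (rule bij_betw_same_card)
qed

(* Classify the colourings into D \<union> M by the set T \<subseteq> M of colours of M they actually use. *)
lemma card_split_by_used_colours:
  assumes "finite S" "finite D" "finite M" "D \<inter> M = {}"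
  shows "card {c \<in> S \<rightarrow>\<^sub>E D \<union> M. Q c} = (\<Sum>T\<in>Pow M. covering_count Q S (D \<union> T) T)"
proof -
  define A where "A T = {c \<in> S \<rightarrow>\<^sub>E D \<union> T. Q c \<and> T \<subseteq> c ` S}" for T
  have "{c \<in> S \<rightarrow>\<^sub>E D \<union> M. Q c} \<subseteq> (\<Union>T\<in>Pow M. A T)"
  proof
    fix c assume c: "c \<in> {c \<in> S \<rightarrow>\<^sub>E D \<union> M. Q c}"
    then have "c \<in> A (c ` S \<inter> M)" unfolding A_def by (auto simp: PiE_iff)
    then show "c \<in> (\<Union>T\<in>Pow M. A T)" by blast
  qed
  moreover have "(\<Union>T\<in>Pow M. A T) \<subseteq> {c \<in> S \<rightarrow>\<^sub>E D \<union> M. Q c}"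
    unfolding A_def by (auto simp: PiE_iff)
  ultimately have split: "{c \<in> S \<rightarrow>\<^sub>E D \<union> M. Q c} = (\<Union>T\<in>Pow M. A T)" by (rule antisym)
  have used: "T = c ` S \<inter> M" if "T \<subseteq> M" "c \<in> A T" for T c
    using that assms(4) unfolding A_def by (auto simp: PiE_iff)
  have finite_A: "finite (A T)" if "T \<subseteq> M" for T
  proof -
    have "finite (S \<rightarrow>\<^sub>E D \<union> T)"
      using assms(1-3) that by (intro finite_PiE) (auto intro: finite_subset)
    then show ?thesis unfolding A_def by (rule rev_finite_subset) auto
  qed
  have "card (\<Union>T\<in>Pow M. A T) = (\<Sum>T\<in>Pow M. card (A T))"
  proof (rule card_UN_disjoint)
    show "\<forall>T1\<in>Pow M. \<forall>T2\<in>Pow M. T1 \<noteq> T2 \<longrightarrow> A T1 \<inter> A T2 = {}"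
      using used by (metis disjoint_iff PowD)
  qed (use assms(3) finite_A in auto)
  then show ?thesis unfolding split covering_count_def A_def .
qed

lemma covering_count_canonical:
  assumes Q: "colour_invariant Q S" and "finite T" and "T \<inter> {1..d} = {}"
  shows "covering_count Q S ({1..d} \<union> T) T = covering_count Q S {1..d + card T} {d+1..d + card T}"
proof -
  obtain f where f: "bij_betw f T {d+1..d + card T}"
    using finite_same_card_bij[OF \<open>finite T\<close>, of "{d+1..d + card T}"] by auto
  define \<sigma> where "\<sigma> x = (if x \<in> T then f x else x)" for x
  have \<sigma>T: "bij_betw \<sigma> T {d+1..d + card T}"
    using f by (rule bij_betw_cong[THEN iffD1, rotated]) (simp add: \<sigma>_def)
  have "bij_betw \<sigma> {1..d} {1..d}"
    using assms(3) by (intro bij_betw_cong[THEN iffD1, OF _ bij_betw_id]) (auto simp: \<sigma>_def)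
  then have "bij_betw \<sigma> ({1..d} \<union> T) ({1..d} \<union> {d+1..d + card T})"
    using \<sigma>T by (rule bij_betw_combine) auto
  moreover have "{1..d} \<union> {d+1..d + card T} = {1..d + card T}" by auto
  moreover have "\<sigma> ` T = {d+1..d + card T}" using \<sigma>T by (simp add: bij_betw_def)
  ultimately show ?thesis using covering_count_bij_betw[OF Q, of \<sigma> "{1..d} \<union> T" _ T] by auto
qed

lemma sum_Pow_by_card:
  assumes "finite M"
  shows "(\<Sum>T\<in>Pow M. g (card T)) = (\<Sum>k\<le>card M. (card M choose k) * g k)"
proof -
  have "(\<Sum>T\<in>Pow M. g (card T)) = (\<Sum>k\<le>card M. \<Sum>T\<in>{T. T \<in> Pow M \<and> card T = k}. g (card T))"
    using assms by (intro sum.group[symmetric]) (auto intro: card_mono)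
  also have "\<dots> = (\<Sum>k\<le>card M. (card M choose k) * g k)"
    using n_subsets[OF assms] by (intro sum.cong) simp_all
  finally show ?thesis .
qed

lemma card_colourings_binomial:
  assumes "finite S" and Q: "colour_invariant Q S"
  shows "card {c \<in> S \<rightarrow>\<^sub>E {1..d+m}. Q c}
           = (\<Sum>k\<le>m. (m choose k) * covering_count Q S {1..d+k} {d+1..d+k})"
proof -
  have "{1..d+m} = {1..d} \<union> {d+1..d+m}" by auto
  then have "card {c \<in> S \<rightarrow>\<^sub>E {1..d+m}. Q c}
      = (\<Sum>T\<in>Pow {d+1..d+m}. covering_count Q S ({1..d} \<union> T) T)"
    using card_split_by_used_colours[OF \<open>finite S\<close>, of "{1..d}" "{d+1..d+m}" Q] by auto
  also have "\<dots> = (\<Sum>T\<in>Pow {d+1..d+m}. covering_count Q S {1..d + card T} {d+1..d + card T})"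
    by (rule sum.cong[OF refl], rule covering_count_canonical[OF Q])
       (meson finite_atLeastAtMost PowD finite_subset, auto)
  also have "\<dots> = (\<Sum>k\<le>m. (m choose k) * covering_count Q S {1..d+k} {d+1..d+k})"
    using sum_Pow_by_card[of "{d+1..d+m}" "\<lambda>k. covering_count Q S {1..d+k} {d+1..d+k}"] by simp
  finally show ?thesis .
qed

(* A colouring of S cannot use more than card S colours. *)
lemma covering_count_eq_0:
  assumes "finite S" and "card S < card Z"
  shows "covering_count Q S Y Z = 0"
proof -
  have "\<not> Z \<subseteq> c ` S" for c
  proof
    assume "Z \<subseteq> c ` S"
    then have "card Z \<le> card (c ` S)" using assms(1) by (intro card_mono) auto
    also have "\<dots> \<le> card S" using assms(1) by (rule card_image_le)
    finally show False using assms(2) by simp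
  qed
  then show ?thesis unfolding covering_count_def by simp
qed

(* (1 - 1)^m, expanded by the binomial theorem. *)
lemma alternating_binomial_sum:
  "(\<Sum>t\<le>m. (-1)^(m - t) * real (m choose t)) = (if m = 0 then 1 else 0)"
  using binomial_ring[of "1::real" "-1" m] by (simp add: mult.commute power_0_left)

lemma binomial_orthogonality:
  assumes "k \<le> i"
  shows "(\<Sum>j\<le>i. (-1)^(i - j) * real (i choose j) * real (j choose k)) = (if k = i then 1 else 0)"
proof -
  have "(\<Sum>j\<le>i. (-1)^(i - j) * real (i choose j) * real (j choose k))
      = (\<Sum>j\<in>{k..i}. (-1)^(i - j) * real (i choose j) * real (j choose k))"
    by (rule sum.mono_neutral_right) (auto simp: binomial_eq_0)
  also have "\<dots> = (\<Sum>j\<in>{k..i}. real (i choose k) * ((-1)^(i - j) * real ((i - k) choose (j - k))))"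
  proof (rule sum.cong[OF refl])
    fix j assume "j \<in> {k..i}"
    then have "real (i choose j) * real (j choose k) = real (i choose k) * real ((i - k) choose (j - k))"
      by (metis atLeastAtMost_iff choose_mult of_nat_mult)
    then show "(-1)^(i - j) * real (i choose j) * real (j choose k)
        = real (i choose k) * ((-1)^(i - j) * real ((i - k) choose (j - k)))"
      by (simp add: algebra_simps)
  qed
  also have "(\<Sum>j\<in>{k..i}. real (i choose k) * ((-1)^(i - j) * real ((i - k) choose (j - k))))
      = real (i choose k) * (\<Sum>t\<le>i - k. (-1)^(i - k - t) * real ((i - k) choose t))"
  proof -
    have "{k..i} = (\<lambda>t. t + k) ` {..i - k}" using assms
      by (simp flip: atLeast0AtMost)
    then show ?thesis by (simp add: sum_distrib_left sum.reindex add.commute)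
  qed
  also have "\<dots> = (if k = i then 1 else 0)"
    using assms alternating_binomial_sum[of "i - k"] by simp
  finally show ?thesis .
qed

lemma binomial_inversion:
  fixes N g :: "nat \<Rightarrow> real"
  assumes N: "\<And>m. N m = (\<Sum>k\<le>m. real (m choose k) * g k)"
  shows "g i = (\<Sum>c=0..i. (-1)^c * real (i choose c) * N (i - c))"
proof -
  have "(\<Sum>c=0..i. (-1)^c * real (i choose c) * N (i - c))
      = (\<Sum>j\<le>i. (-1)^(i - j) * real (i choose j) * N j)"
    by (subst sum.atLeastAtMost_rev)
       (auto simp: atLeast0AtMost binomial_symmetric[symmetric] intro!: sum.cong)
  also have "\<dots> = (\<Sum>j\<le>i. \<Sum>k\<le>i. (-1)^(i - j) * real (i choose j) * (real (j choose k) * g k))"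
  proof (rule sum.cong[OF refl])
    fix j assume "j \<in> {..i}"
    then have "N j = (\<Sum>k\<le>i. real (j choose k) * g k)"
      unfolding N by (intro sum.mono_neutral_left) (auto simp: binomial_eq_0)
    then show "(-1)^(i - j) * real (i choose j) * N j
        = (\<Sum>k\<le>i. (-1)^(i - j) * real (i choose j) * (real (j choose k) * g k))"
      by (simp add: sum_distrib_left)
  qed
  also have "\<dots> = (\<Sum>k\<le>i. g k * (\<Sum>j\<le>i. (-1)^(i - j) * real (i choose j) * real (j choose k)))"
    by (subst sum.swap) (simp add: sum_distrib_left algebra_simps)
  also have "\<dots> = (\<Sum>k\<le>i. if k = i then g k else 0)"
    by (intro sum.cong) (simp_all add: binomial_orthogonality)
  also have "\<dots> = g i" by simp
  finally show ?thesis by simp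
qed

lemma sum_binomial_truncate:
  fixes f :: "nat \<Rightarrow> real"
  assumes "\<forall>i>n. f i = 0"
  shows "(\<Sum>i\<le>n. f i * real (m choose i)) = (\<Sum>i\<le>m. real (m choose i) * f i)"
proof -
  have "(\<Sum>i\<le>n. f i * real (m choose i)) = (\<Sum>i\<le>n + m. f i * real (m choose i))"
    using assms by (intro sum.mono_neutral_left) auto
  also have "\<dots> = (\<Sum>i\<le>m. f i * real (m choose i))"
    by (intro sum.mono_neutral_right) (auto simp: binomial_eq_0)
  finally show ?thesis by (simp add: mult.commute)
qed

lemma binomial_coeffs_unique:
  fixes f g :: "nat \<Rightarrow> real"
  assumes "\<forall>i>n. f i = 0" and "\<forall>i>n. g i = 0"
    and eq: "\<And>m. (\<Sum>i\<le>n. f i * real (m choose i)) = (\<Sum>i\<le>n. g i * real (m choose i))"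
  shows "f = g"
proof
  fix i
  define N where "N m = (\<Sum>i\<le>n. f i * real (m choose i))" for m
  have "N m = (\<Sum>k\<le>m. real (m choose k) * f k)" for m
    unfolding N_def using assms(1) by (rule sum_binomial_truncate)
  moreover have "N m = (\<Sum>k\<le>m. real (m choose k) * g k)" for m
    unfolding N_def eq using assms(2) by (rule sum_binomial_truncate)
  ultimately show "f i = g i" using binomial_inversion by metis
qed

lemma binomial_basis_poly:
  fixes a :: "nat \<Rightarrow> real"
  shows "\<exists>p. degree p \<le> n \<and> (\<forall>x. poly p x = (\<Sum>j\<le>n. a j * ((x + b) gchoose j)))"
proof -
  define B where "B j = smult (1 / fact j) (\<Prod>i=0..<j. [:b - of_nat i, 1:])" for j
  have poly_B: "poly (B j) x = (x + b) gchoose j" for j x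
    by (simp add: B_def poly_prod gbinomial_prod_rev algebra_simps)
  have "degree (B j) \<le> j" for j
  proof -
    have "degree (\<Prod>i=0..<j. [:b - of_nat i, 1:]) \<le> (\<Sum>i=0..<j. degree [:b - of_nat i, 1:])"
      using degree_prod_sum_le[of "{0..<j}" "\<lambda>i. [:b - of_nat i, 1:]"] by simp
    then show ?thesis unfolding B_def by (simp add: degree_smult_le)
  qed
  then have "degree (\<Sum>j\<le>n. smult (a j) (B j)) \<le> n"
    by (intro degree_sum_le) (auto intro: order_trans[OF degree_smult_le] le_trans)
  moreover have "poly (\<Sum>j\<le>n. smult (a j) (B j)) x = (\<Sum>j\<le>n. a j * ((x + b) gchoose j))" for x
    by (simp add: poly_sum poly_B)
  ultimately show ?thesis by blast
qed

lemma poly_eqI_shifted_nats: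
  fixes p q :: "real poly"
  assumes "\<And>m::nat. poly p (real m + a) = poly q (real m + a)"
  shows "p = q"
proof (rule ccontr)
  assume "p \<noteq> q"
  then have "finite {x. poly (p - q) x = 0}" by (intro poly_roots_finite) simp
  moreover have "range (\<lambda>m::nat. real m + a) \<subseteq> {x. poly (p - q) x = 0}" using assms by auto
  moreover have "infinite (range (\<lambda>m::nat. real m + a))"
    by (rule range_inj_infinite) (auto simp: inj_def)
  ultimately show False using finite_subset by blast
qed

lemma chrom_poly_eqI:
  assumes "degree p \<le> n" and "\<And>k. poly p (real k) = real (chi n E k)"
  shows "chrom_poly n E = p"
  unfolding chrom_poly_def
proof (rule the_equality)
  fix q assume "degree q \<le> n \<and> (\<forall>k. poly q (real k) = real (chi n E k))"
  then show "q = p" using assms(2) by (intro poly_eqI_shifted_nats[where a=0]) simp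
qed (use assms in blast)

lemma fvec_eqI:
  assumes "\<forall>i>n. g i = 0" and "\<And>x. poly p x = (\<Sum>i\<le>n. g i * ((x - 1) gchoose i))"
  shows "fvec n p = g"
  unfolding fvec_def
proof (rule the_equality)
  fix f assume f: "(\<forall>i>n. f i = 0) \<and> (\<forall>x. poly p x = (\<Sum>i\<le>n. f i * ((x - 1) gchoose i)))"
  show "f = g"
  proof (rule binomial_coeffs_unique[where n=n])
    fix m :: nat
    show "(\<Sum>i\<le>n. f i * real (m choose i)) = (\<Sum>i\<le>n. g i * real (m choose i))"
      using f assms(2)[of "real m + 1"] by (simp add: binomial_gbinomial)
  qed (use f assms(1) in auto)
qed (use assms in auto)

definition monochromatic :: "nat set \<Rightarrow> (nat \<Rightarrow> nat) \<Rightarrow> bool" where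
  "monochromatic e c \<longleftrightarrow> (\<exists>a. \<forall>v\<in>e. c v = a)"

definition proper_colouring :: "nat set set \<Rightarrow> (nat \<Rightarrow> nat) \<Rightarrow> bool" where
  "proper_colouring E c \<longleftrightarrow> (\<forall>e\<in>E. \<not> monochromatic e c)"

lemma chi_eq_card_proper: "chi n E k = card {c \<in> {1..n} \<rightarrow>\<^sub>E {1..k}. proper_colouring E c}"
  unfolding chi_def proper_colouring_def monochromatic_def by simp

lemma monochromatic_relabel:
  assumes "e \<subseteq> S" and f: "inj_on f (c ` S)"
  shows "monochromatic e (restrict (f \<circ> c) S) \<longleftrightarrow> monochromatic e c"
proof
  assume "monochromatic e (restrict (f \<circ> c) S)"
  then obtain a where "\<forall>v\<in>e. restrict (f \<circ> c) S v = a" unfolding monochromatic_def by blast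
  then have a: "\<forall>v\<in>e. f (c v) = a" using \<open>e \<subseteq> S\<close> by (metis comp_apply restrict_apply' subsetD)
  have "c v = c w" if "v \<in> e" "w \<in> e" for v w
    using a that \<open>e \<subseteq> S\<close> inj_onD[OF f] by (metis image_eqI subsetD)
  then show "monochromatic e c" unfolding monochromatic_def by blast
qed (use \<open>e \<subseteq> S\<close> in \<open>auto simp: monochromatic_def\<close>)

lemma colour_invariant_monochromatic: "e \<subseteq> S \<Longrightarrow> colour_invariant (monochromatic e) S"
  unfolding colour_invariant_def using monochromatic_relabel by blast

lemma colour_invariant_proper: "\<forall>e\<in>E. e \<subseteq> S \<Longrightarrow> colour_invariant (proper_colouring E) S"
  unfolding colour_invariant_def proper_colouring_def using monochromatic_relabel by blast

lemma colour_invariant_True: "colour_invariant (\<lambda>_. True) S"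
  unfolding colour_invariant_def by simp

(* Colourings making a nonempty edge e monochromatic: one colour for e, free colours elsewhere. *)
lemma card_monochromatic:
  assumes "finite S" "finite Y" "e \<subseteq> S" "e \<noteq> {}"
  shows "card {c \<in> S \<rightarrow>\<^sub>E Y. monochromatic e c} = card Y ^ (card S - card e + 1)"
proof -
  define F where "F a = (\<Pi>\<^sub>E v\<in>S. if v \<in> e then {a} else Y)" for a
  have F_mem: "c v \<in> (if v \<in> e then {a} else Y)" if "c \<in> F a" "v \<in> S" for a c v
    using that unfolding F_def by blast
  have split: "{c \<in> S \<rightarrow>\<^sub>E Y. monochromatic e c} = (\<Union>a\<in>Y. F a)"
  proof (intro equalityI subsetI)
    fix c assume c: "c \<in> {c \<in> S \<rightarrow>\<^sub>E Y. monochromatic e c}"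
    then obtain a where a: "\<forall>v\<in>e. c v = a" unfolding monochromatic_def by auto
    have "a \<in> Y" using c a assms(3,4) by (auto simp: PiE_iff)
    moreover have "c \<in> F a" using c a unfolding F_def by (auto simp: PiE_iff)
    ultimately show "c \<in> (\<Union>a\<in>Y. F a)" by blast
  next
    fix c assume "c \<in> (\<Union>a\<in>Y. F a)"
    then obtain a where a: "a \<in> Y" "c \<in> F a" by blast
    have "c v \<in> Y" if "v \<in> S" for v
      using F_mem[OF a(2) that] a(1) by (cases "v \<in> e") auto
    then have "c \<in> S \<rightarrow>\<^sub>E Y" using a(2) unfolding F_def by (auto simp: PiE_iff)
    moreover have "\<forall>v\<in>e. c v = a" using F_mem[OF a(2)] assms(3) by fastforce
    ultimately show "c \<in> {c \<in> S \<rightarrow>\<^sub>E Y. monochromatic e c}"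
      unfolding monochromatic_def by blast
  qed
  have card_F: "card (F a) = card Y ^ (card S - card e)" for a
  proof -
    have "card (F a) = (\<Prod>v\<in>S. card (if v \<in> e then {a} else Y))"
      unfolding F_def using assms(1) by (rule card_PiE)
    also have "\<dots> = (\<Prod>v\<in>S. if v \<in> e then 1 else card Y)"
      by (intro prod.cong) auto
    also have "\<dots> = card Y ^ card (S - e)"
      using assms(1) by (simp add: prod.If_cases Diff_eq)
    finally show ?thesis using assms(1,3) by (simp add: card_Diff_subset finite_subset)
  qed
  have disjoint: "F a \<inter> F b = {}" if "a \<noteq> b" for a b
  proof -
    obtain v where "v \<in> e" using assms(4) by auto
    then have v: "v \<in> S" using assms(3) by auto
    have "f v = a \<and> f v = b" if "f \<in> F a" "f \<in> F b" for f
      using F_mem[OF that(1) v] F_mem[OF that(2) v] \<open>v \<in> e\<close> by simp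
    then show "F a \<inter> F b = {}" using \<open>a \<noteq> b\<close> by blast
  qed
  have "card (\<Union>a\<in>Y. F a) = (\<Sum>a\<in>Y. card (F a))"
    using assms(1,2) disjoint unfolding F_def by (intro card_UN_disjoint) (auto intro!: finite_PiE)
  then show ?thesis using split card_F by simp
qed

(* If the number of Q-colourings with k colours is k^p, binomial inversion of the expansion
   gives the covering counts in closed form.  This evaluates both sides of the bounds. *)
lemma covering_count_alternating_sum:
  assumes "finite S" and Q: "colour_invariant Q S"
    and count: "\<And>k. card {c \<in> S \<rightarrow>\<^sub>E {1..k}. Q c} = k ^ p"
  shows "real (covering_count Q S {1..d+i} {d+1..d+i})
           = (\<Sum>c=0..i. (-1)^c * real (i choose c) * real (i - c + d) ^ p)"
proof -
  have "real (covering_count Q S {1..d+i} {d+1..d+i})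
      = (\<Sum>c=0..i. (-1)^c * real (i choose c) * real ((d + (i - c)) ^ p))"
  proof (rule binomial_inversion)
    fix m
    have "(d + m) ^ p = (\<Sum>k\<le>m. (m choose k) * covering_count Q S {1..d+k} {d+1..d+k})"
      using card_colourings_binomial[OF assms(1,2), of d m] count[of "d + m"] by simp
    then show "real ((d + m) ^ p)
        = (\<Sum>k\<le>m. real (m choose k) * real (covering_count Q S {1..d+k} {d+1..d+k}))"
      by (metis (no_types, lifting) of_nat_mult of_nat_sum sum.cong)
  qed
  then show ?thesis by (simp add: add.commute)
qed

lemma chi_binomial_expansion:
  assumes "\<forall>e\<in>E. e \<subseteq> {1..n}"
  shows "real (chi n E (d + m))
           = (\<Sum>j\<le>n. real (covering_count (proper_colouring E) {1..n} {1..d+j} {d+1..d+j})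
                        * real (m choose j))"
proof -
  let ?P = "\<lambda>j. real (covering_count (proper_colouring E) {1..n} {1..d+j} {d+1..d+j})"
  have "chi n E (d + m)
      = (\<Sum>j\<le>m. (m choose j) * covering_count (proper_colouring E) {1..n} {1..d+j} {d+1..d+j})"
    unfolding chi_eq_card_proper
    by (intro card_colourings_binomial colour_invariant_proper assms) simp
  then have "real (chi n E (d + m)) = (\<Sum>j\<le>m. real (m choose j) * ?P j)" by simp
  also have "\<dots> = (\<Sum>j\<le>n. ?P j * real (m choose j))"
    by (rule sum_binomial_truncate[symmetric]) (auto intro!: covering_count_eq_0)
  finally show ?thesis .
qed

(* Key identity: f_i(\<chi>_H(k+1)) counts proper colourings with colours {1..i+2} that use all
   of the colours 3, ..., i+2.  Both \<chi>_H(k) and \<chi>_H(k+1) are written in binomial bases,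
   by the expansion above with d = 0 and d = 2. *)
lemma fvec_shifted_chrom_poly:
  assumes "\<forall>e\<in>E. e \<subseteq> {1..n}"
  shows "fvec n (pcompose (chrom_poly n E) [:1, 1:]) i
           = real (covering_count (proper_colouring E) {1..n} {1..2+i} {2+1..2+i})"
proof -
  define P where "P d j = real (covering_count (proper_colouring E) {1..n} {1..d+j} {d+1..d+j})"
    for d j
  have P_vanish: "\<forall>j>n. P d j = 0" for d
    unfolding P_def by (auto intro!: covering_count_eq_0)
  have chi: "real (chi n E (d + m)) = (\<Sum>j\<le>n. P d j * real (m choose j))" for d m
    unfolding P_def using assms by (rule chi_binomial_expansion)
  obtain R where R: "degree R \<le> n" "\<And>x. poly R x = (\<Sum>j\<le>n. P 0 j * ((x + 0) gchoose j))"
    using binomial_basis_poly by blast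
  have "chrom_poly n E = R"
    using R chi[of 0] by (intro chrom_poly_eqI) (simp_all add: binomial_gbinomial)
  moreover obtain W where W: "\<And>x. poly W x = (\<Sum>j\<le>n. P 2 j * ((x + -1) gchoose j))"
    using binomial_basis_poly by blast
  moreover have "pcompose R [:1, 1:] = W"
  proof (rule poly_eqI_shifted_nats[where a=1])
    fix m :: nat
    have "poly (pcompose R [:1, 1:]) (real m + 1) = real (chi n E (2 + m))"
      using R(2) chi[of 0 "2 + m"] by (simp add: poly_pcompose binomial_gbinomial algebra_simps)
    also have "\<dots> = poly W (real m + 1)"
      using W chi[of 2 m] by (simp add: binomial_gbinomial)
    finally show "poly (pcompose R [:1, 1:]) (real m + 1) = poly W (real m + 1)" .
  qed
  ultimately have "fvec n (pcompose (chrom_poly n E) [:1, 1:]) = P 2"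
    using P_vanish by (intro fvec_eqI) simp_all
  then show ?thesis by (simp add: P_def)
qed

lemma covering_count_mono:
  assumes "finite S" "finite Y" "\<And>c. Q c \<Longrightarrow> Q' c"
  shows "covering_count Q S Y Z \<le> covering_count Q' S Y Z"
  unfolding covering_count_def using assms
  by (intro card_mono) (auto intro: rev_finite_subset[OF finite_PiE[of S "\<lambda>_. Y"]])

(* Every colouring is proper or makes some edge monochromatic. *)
lemma covering_count_union_bound:
  assumes "finite S" "finite Y" "finite E"
  shows "covering_count (\<lambda>_. True) S Y Z
           \<le> covering_count (proper_colouring E) S Y Z + (\<Sum>e\<in>E. covering_count (monochromatic e) S Y Z)"
proof -
  let ?C = "\<lambda>Q. {c \<in> S \<rightarrow>\<^sub>E Y. Q c \<and> Z \<subseteq> c ` S}"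
  have finite_C: "finite (?C Q)" for Q
    using assms(1,2) by (auto intro: rev_finite_subset[OF finite_PiE[of S "\<lambda>_. Y"]])
  have "?C (\<lambda>_. True) \<subseteq> ?C (proper_colouring E) \<union> (\<Union>e\<in>E. ?C (monochromatic e))"
    unfolding proper_colouring_def by auto
  then have "card (?C (\<lambda>_. True)) \<le> card (?C (proper_colouring E) \<union> (\<Union>e\<in>E. ?C (monochromatic e)))"
    using assms(3) finite_C by (intro card_mono) auto
  also have "\<dots> \<le> card (?C (proper_colouring E)) + (\<Sum>e\<in>E. card (?C (monochromatic e)))"
    using card_Un_le[of "?C (proper_colouring E)" "\<Union>e\<in>E. ?C (monochromatic e)"]
      card_UN_le[OF assms(3), of "\<lambda>e. ?C (monochromatic e)"] by linarith
  finally show ?thesis unfolding covering_count_def .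
qed

(* Upper bound: proper colourings are among all colourings. *)
lemma f_vector_upper_bound:
  assumes "\<forall>e\<in>E. e \<subseteq> {1..n}"
  shows "fvec n (pcompose (chrom_poly n E) [:1, 1:]) i
           \<le> (\<Sum>c=0..i. (-1)^c * real (i choose c) * real (i - c + 2) ^ n)"
proof -
  have "fvec n (pcompose (chrom_poly n E) [:1, 1:]) i
      = real (covering_count (proper_colouring E) {1..n} {1..2+i} {2+1..2+i})"
    using assms by (rule fvec_shifted_chrom_poly)
  also have "\<dots> \<le> real (covering_count (\<lambda>_. True) {1..n} {1..2+i} {2+1..2+i})"
    by (simp add: covering_count_mono)
  also have "\<dots> = (\<Sum>c=0..i. (-1)^c * real (i choose c) * real (i - c + 2) ^ n)"
    by (rule covering_count_alternating_sum) (simp_all add: colour_invariant_True card_PiE)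
  finally show ?thesis .
qed

(* Lower bound: all colourings minus, for each edge, those making it monochromatic. *)
lemma f_vector_lower_bound:
  assumes edges: "\<forall>e\<in>E. e \<subseteq> {1..n}" and "uniform r E" and "r \<ge> 1"
  shows "(\<Sum>c=0..i. (-1)^c * real (i choose c) *
            (real (i - c + 2) ^ n - real (card E) * real (i - c + 2) ^ (n - r + 1)))
           \<le> fvec n (pcompose (chrom_poly n E) [:1, 1:]) i"
proof -
  let ?count = "\<lambda>Q. real (covering_count Q {1..n} {1..2+i} {2+1..2+i})"
  let ?alt = "\<lambda>p. \<Sum>c=0..i. (-1)^c * real (i choose c) * real (i - c + 2) ^ p"
  have "finite E" using edges by (intro finite_subset[of E "Pow {1..n}"]) auto
  have all: "?count (\<lambda>_. True) = ?alt n"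
    by (rule covering_count_alternating_sum) (simp_all add: colour_invariant_True card_PiE)
  have mono: "?count (monochromatic e) = ?alt (n - r + 1)" if "e \<in> E" for e
  proof (rule covering_count_alternating_sum)
    have "card e = r" "e \<subseteq> {1..n}" using that edges \<open>uniform r E\<close> by (auto simp: uniform_def)
    moreover from this have "e \<noteq> {}" using \<open>r \<ge> 1\<close> by auto
    ultimately show "colour_invariant (monochromatic e) {1..n}"
      and "card {c \<in> {1..n} \<rightarrow>\<^sub>E {1..k}. monochromatic e c} = k ^ (n - r + 1)" for k
      by (simp_all add: colour_invariant_monochromatic card_monochromatic)
  qed simp
  have "?count (\<lambda>_. True) \<le> ?count (proper_colouring E) + (\<Sum>e\<in>E. ?count (monochromatic e))"
    using covering_count_union_bound[OF _ _ \<open>finite E\<close>, of "{1..n}" "{1..2+i}" "{2+1..2+i}"]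
    by (simp flip: of_nat_add of_nat_sum)
  then have "?alt n - real (card E) * ?alt (n - r + 1) \<le> ?count (proper_colouring E)"
    using all mono by simp
  moreover have "(\<Sum>c=0..i. (-1)^c * real (i choose c) *
            (real (i - c + 2) ^ n - real (card E) * real (i - c + 2) ^ (n - r + 1)))
      = ?alt n - real (card E) * ?alt (n - r + 1)"
    by (simp add: sum_subtractf sum_distrib_left right_diff_distrib mult.left_commute)
  ultimately show ?thesis using fvec_shifted_chrom_poly[OF edges] by simp
qed

theorem mainTheorem9:
  fixes n r :: nat and E :: "nat set set"
  assumes "n > 0" and "hypergraph n E" and "uniform r E" and "r \<ge> 2"
  shows "(\<forall>i\<le>n.
           (\<Sum>c=0..i. (-1)^c * real (i choose c) *
               (real (i - c + 2) ^ n - real (card E) * real (i - c + 2) ^ (n - r + 1)))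
             \<le> fvec n (pcompose (chrom_poly n E) [:1, 1:]) i
         \<and> fvec n (pcompose (chrom_poly n E) [:1, 1:]) i
             \<le> (\<Sum>c=0..i. (-1)^c * real (i choose c) * real (i - c + 2) ^ n))
         \<and> (\<forall>E'. hypergraph n E' \<longrightarrow> (\<forall>i\<le>n.
           fvec n (pcompose (chrom_poly n E') [:1, 1:]) i
             \<le> (\<Sum>c=0..i. (-1)^c * real (i choose c) * real (i - c + 2) ^ n)))"
proof -
  have edges: "\<forall>e\<in>F. e \<subseteq> {1..n}" if "hypergraph n F" for F
    using that unfolding hypergraph_def by blast
  have "r \<ge> 1" using assms(4) by simp
  then show ?thesis
    using f_vector_lower_bound[OF edges[OF assms(2)] assms(3)] f_vector_upper_bound[OF edges]
      assms(2) by blast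
qed

end
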